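(* Let $\mathfrak c:(0,1)\to(0,\infty)$ be any function, $\alpha>0$, $n\ge1$, $p_0\in(1/2,1)$ and $0<\epsilon<p_0-1/2$. Consider two two-armed problem instances with Bernoulli arms: in $\mathcal P_1$, arm 1 is $\mathrm{Ber}(p_0)$ and arm 2 is $\mathrm{Ber}(p_0-\epsilon)$; in $\mathcal P_2$ the arms are swapped. For an instance, let $c_i=\mathfrak c(q_i)$ where $q_i$ is the Bernoulli parameter of arm $i$, and define the approx-oracle allocation for the objective $\varphi(c,T)=c/T^\alpha$ as $\tilde T_i^*\coloneqq n\,c_i^{1/\alpha}/(c_1^{1/\alpha}+c_2^{1/\alpha})$, $i=1,2$. Let $\tau\coloneqq|\tilde T_1^*-n/2|$ computed for $\mathcal P_1$ (it has the same value for $\mathcal P_2$). Then for every adaptive allocation scheme $\mathcal A$ with budget $n$, letting $T_1,T_2$ ($T_1+T_2=n$) be the numbers of samples it allocates to the two arms, $$\max_{\mathcal P\in\{\mathcal P_1,\mathcal P_2\}}\ \max_{i\in\{1,2\}}\ \mathbb E_{\mathcal P}\big[|T_i-\tilde T_i^*|\big]\;\ge\;\frac{\big(1-\epsilon\sqrt{n/(1-p_0)}\big)\,\tau}{2},$$ where $\tilde T_i^*$ is the approx-oracle allocation of the instance $\mathcal P$ under which the expectation is taken.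
   Context: An adaptive allocation scheme with budget $n$ is a sequence of rules that, at each round $t=1,\dots,n$, selects an arm $i\in\{1,2\}$ based on $n$ and the history of selected arms and observations up to round $t-1$; the selected arm then produces an independent draw from its distribution. $\mathbb E_{\mathcal P}$ denotes expectation under the probability measure induced by the scheme and instance $\mathcal P$ on the observations. *)

theory Defs
  imports "HOL-Probability.Probability"
begin

text \<open>A (deterministic) adaptive allocation scheme for budget n is a function
  from histories (lists of (selected arm, observation)) to the next arm in {1,2}.\<close>

type_synonym history = "(nat \<times> bool) list"

primrec run_scheme :: "(history \<Rightarrow> nat) \<Rightarrow> (nat \<Rightarrow> real) \<Rightarrow> nat \<Rightarrow> history pmf" where
  "run_scheme A q 0 = return_pmf []"
| "run_scheme A q (Suc t) =
     bind_pmf (run_scheme A q t) (\<lambda>h.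
       map_pmf (\<lambda>x. h @ [(A h, x)]) (bernoulli_pmf (q (A h))))"

definition num_samples :: "nat \<Rightarrow> history \<Rightarrow> nat" where
  "num_samples i h = length (filter (\<lambda>p. fst p = i) h)"

definition approx_oracle :: "(real \<Rightarrow> real) \<Rightarrow> real \<Rightarrow> nat \<Rightarrow> (nat \<Rightarrow> real) \<Rightarrow> nat \<Rightarrow> real" where
  "approx_oracle cf \<alpha> n q i =
     real n * cf (q i) powr (1/\<alpha>) / (cf (q 1) powr (1/\<alpha>) + cf (q 2) powr (1/\<alpha>))"

end

theory Submission imports Defs begin

text \<open>Le Cam's two-point method. The oracle allocations \<open>a\<close>, \<open>b\<close> of arm 1 under the two
  instances sum to \<open>n\<close> and lie at distance \<open>\<tau>\<close> from \<open>n/2\<close>, so \<open>|T\<^sub>1 - a| + |T\<^sub>1 - b| \<ge> 2\<tau>\<close> for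
  every history, and the two expected errors add up to at least \<open>2\<tau>\<close> times the overlap
  \<open>\<Sum>\<^sub>h min (P\<^sub>1 h) (P\<^sub>2 h)\<close> of the history distributions. By Cauchy-Schwarz the overlap is
  at least half the squared Bhattacharyya affinity, and that affinity factorises over the
  rounds as \<open>\<beta>\<^sup>n\<close> whichever arm the scheme samples, because both arms have the same Bernoulli
  affinity \<open>\<beta> \<ge> 1 - \<epsilon>\<^sup>2 / (4 (1 - p\<^sub>0))\<close>.\<close>

definition bernoulli_affinity :: "real \<Rightarrow> real \<Rightarrow> real" where
  "bernoulli_affinity p q = sqrt (p * q) + sqrt ((1 - p) * (1 - q))"

lemma bernoulli_affinity_eq_hellinger:
  fixes p q :: real
  assumes "0 \<le> p" "p \<le> 1" "0 \<le> q" "q \<le> 1"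
  shows "bernoulli_affinity p q
           = 1 - ((sqrt p - sqrt q)^2 + (sqrt (1 - q) - sqrt (1 - p))^2) / 2"
proof -
  have "(sqrt p - sqrt q)^2 = p + q - 2 * sqrt (p * q)"
    using assms by (simp add: power2_diff real_sqrt_mult)
  moreover have "(sqrt (1 - q) - sqrt (1 - p))^2 = (1 - q) + (1 - p) - 2 * sqrt ((1 - p) * (1 - q))"
    using assms by (simp add: power2_diff real_sqrt_mult)
  ultimately show ?thesis unfolding bernoulli_affinity_def by (simp add: field_simps)
qed

lemma sqrt_diff_square_le:
  fixes x y :: real
  assumes "0 < y" "y \<le> x"
  shows "(sqrt x - sqrt y)^2 \<le> (x - y)^2 / (4 * y)"
proof -
  have eq: "(sqrt x - sqrt y)^2 * (sqrt x + sqrt y)^2 = (x - y)^2"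
    using assms by (simp add: power_mult_distrib[symmetric] algebra_simps power2_eq_square)
  have "(2 * sqrt y)^2 \<le> (sqrt x + sqrt y)^2" using assms by (intro power_mono) auto
  then have "4 * y \<le> (sqrt x + sqrt y)^2" using assms by (simp add: power_mult_distrib)
  then have "(sqrt x - sqrt y)^2 * (4 * y) \<le> (x - y)^2"
    unfolding eq[symmetric] by (intro mult_left_mono) auto
  then show ?thesis using assms by (simp add: pos_le_divide_eq)
qed

lemma bernoulli_affinity_ge:
  fixes p q :: real
  assumes "1/2 < q" "q \<le> p" "p < 1"
  shows "1 - (p - q)^2 / (4 * (1 - p)) \<le> bernoulli_affinity p q"
proof -
  have "(sqrt p - sqrt q)^2 \<le> (p - q)^2 / (4 * q)"
    using assms by (intro sqrt_diff_square_le) auto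
  also have "\<dots> \<le> (p - q)^2 / (4 * (1 - p))"
    using assms by (intro divide_left_mono) auto
  finally have "(sqrt p - sqrt q)^2 \<le> (p - q)^2 / (4 * (1 - p))" .
  moreover have "(sqrt (1 - q) - sqrt (1 - p))^2 \<le> (p - q)^2 / (4 * (1 - p))"
    using sqrt_diff_square_le[of "1 - p" "1 - q"] assms by (simp add: power2_commute)
  moreover have "bernoulli_affinity p q
      = 1 - ((sqrt p - sqrt q)^2 + (sqrt (1 - q) - sqrt (1 - p))^2) / 2"
    using assms by (intro bernoulli_affinity_eq_hellinger) auto
  ultimately show ?thesis by argo
qed

lemma power_ge_one_minus_sqrt:
  fixes \<beta> \<eta> :: real and n :: nat
  assumes "0 \<le> \<beta>" "1 - \<eta> \<le> \<beta>" "0 \<le> \<eta>"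
  shows "1 - sqrt (4 * n * \<eta>) \<le> \<beta> ^ (2 * n)"
proof (cases "1 \<le> 4 * n * \<eta>")
  case True
  then have "1 \<le> sqrt (4 * n * \<eta>)" by simp
  moreover have "0 \<le> \<beta> ^ (2 * n)" using assms by simp
  ultimately show ?thesis by linarith
next
  case False
  then have "n \<ge> 1 \<Longrightarrow> \<eta> < 1/4"
    using assms(3) mult_right_mono[of 1 "real n" \<eta>] by auto
  moreover have "n = 0 \<Longrightarrow> ?thesis" by simp
  moreover have "\<eta> < 1/4 \<Longrightarrow> ?thesis"
  proof -
    assume \<eta>: "\<eta> < 1/4"
    have "1 + (- 2 * \<eta>) \<le> (1 - \<eta>)^2" by (simp add: power2_diff)
    also have "\<dots> \<le> \<beta>^2" using assms \<eta> by (intro power_mono) auto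
    finally have "(1 + (- 2 * \<eta>)) ^ n \<le> (\<beta>^2) ^ n" using \<eta> by (intro power_mono) auto
    moreover have "1 + real n * (- 2 * \<eta>) \<le> (1 + (- 2 * \<eta>)) ^ n"
      using \<eta> by (intro Bernoulli_inequality) auto
    moreover have "2 * (n * \<eta>) \<le> sqrt (4 * n * \<eta>)"
    proof (intro real_le_rsqrt)
      have "(n * \<eta>) * (n * \<eta>) \<le> (n * \<eta>) * 1"
        using False assms(3) by (intro mult_left_mono) auto
      then show "(2 * (n * \<eta>))^2 \<le> 4 * n * \<eta>" by (simp add: power2_eq_square)
    qed
    ultimately show ?thesis by (simp add: power_mult)
  qed
  ultimately show ?thesis by linarith
qed

primrec histories :: "nat \<Rightarrow> history set" where
  "histories 0 = {[]}"
| "histories (Suc t) = (\<lambda>(h, y). h @ [y]) ` (histories t \<times> ({1, 2} \<times> UNIV))"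

lemma finite_histories: "finite (histories t)"
  by (induction t) auto

lemma set_pmf_run_scheme_subset:
  assumes "\<forall>h. A h \<in> {1, 2}"
  shows "set_pmf (run_scheme A q t) \<subseteq> histories t"
  using assms by (induction t) (auto simp: set_bind_pmf)

lemma sum_histories_Suc:
  "(\<Sum>h\<in>histories (Suc t). F h)
     = (\<Sum>h\<in>histories t. \<Sum>y\<in>{1::nat, 2} \<times> (UNIV :: bool set). F (h @ [y]))"
proof -
  have "inj_on (\<lambda>(h, y). h @ [y]) (histories t \<times> ({1::nat, 2} \<times> (UNIV :: bool set)))"
    by (auto simp: inj_on_def)
  then show ?thesis
    by (simp add: sum.reindex sum.cartesian_product split_def)
qed

lemma pmf_run_scheme_snoc:
  "pmf (run_scheme A q (Suc t)) (h @ [(a, x)]) =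
     pmf (run_scheme A q t) h * (if a = A h then pmf (bernoulli_pmf (q a)) x else 0)"
proof -
  have step: "measure_pmf.prob (bernoulli_pmf (q (A h'))) ((\<lambda>x. h' @ [(A h', x)]) -` {h @ [(a, x)]})
      = (if h' = h then (if a = A h then pmf (bernoulli_pmf (q a)) x else 0) else 0)" for h'
  proof (cases "h' = h \<and> a = A h")
    case True
    then have "(\<lambda>x'. h' @ [(A h', x')]) -` {h @ [(a, x)]} = {x}" by auto
    then show ?thesis using True by (simp add: measure_pmf_single)
  next
    case False
    then have "(\<lambda>x'. h' @ [(A h', x')]) -` {h @ [(a, x)]} = {}" by auto
    then show ?thesis using False by auto
  qed
  show ?thesis
    by (simp only: run_scheme.simps pmf_bind pmf_map step)
       (subst integral_measure_pmf_real[where A = "{h}"]; auto split: if_splits)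
qed

text \<open>Requiring the same affinity \<open>\<beta>\<close> for every arm is what makes the per-round factor
  independent of the scheme's (adaptive) choice of arm.\<close>

lemma affinity_run_scheme:
  assumes arms: "\<forall>h. A h \<in> {1, 2}"
    and q: "\<And>a. a \<in> {1, 2} \<Longrightarrow> 0 \<le> q1 a \<and> q1 a \<le> 1 \<and> 0 \<le> q2 a \<and> q2 a \<le> 1"
    and \<beta>: "\<And>a. a \<in> {1, 2} \<Longrightarrow> bernoulli_affinity (q1 a) (q2 a) = \<beta>"
  shows "(\<Sum>h\<in>histories t. sqrt (pmf (run_scheme A q1 t) h * pmf (run_scheme A q2 t) h)) = \<beta> ^ t"
proof (induction t)
  case (Suc t)
  let ?p1 = "pmf (run_scheme A q1 t)" and ?p2 = "pmf (run_scheme A q2 t)"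
  let ?b = "\<lambda>a x. sqrt (pmf (bernoulli_pmf (q1 a)) x * pmf (bernoulli_pmf (q2 a)) x)"
  have round: "(\<Sum>y\<in>{1::nat, 2} \<times> (UNIV :: bool set). if fst y = A h then ?b (fst y) (snd y) else 0)
      = \<beta>" for h
  proof -
    have a: "A h \<in> {1, 2}" using arms by auto
    then have "(\<Sum>y\<in>{1::nat, 2} \<times> (UNIV :: bool set). if fst y = A h then ?b (fst y) (snd y) else 0)
        = ?b (A h) True + ?b (A h) False"
      by (auto simp: sum.cartesian_product[symmetric] UNIV_bool)
    also have "\<dots> = \<beta>"
      using q[OF a] \<beta>[OF a] by (simp add: bernoulli_affinity_def add.commute)
    finally show ?thesis .
  qed
  have "(\<Sum>h\<in>histories (Suc t). sqrt (pmf (run_scheme A q1 (Suc t)) h * pmf (run_scheme A q2 (Suc t)) h))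
    = (\<Sum>h\<in>histories t. sqrt (?p1 h * ?p2 h) *
         (\<Sum>y\<in>{1::nat, 2} \<times> (UNIV :: bool set). if fst y = A h then ?b (fst y) (snd y) else 0))"
    unfolding sum_histories_Suc sum_distrib_left
    by (intro sum.cong refl) (auto simp del: run_scheme.simps simp: pmf_run_scheme_snoc real_sqrt_mult)
  also have "\<dots> = (\<Sum>h\<in>histories t. sqrt (?p1 h * ?p2 h) * \<beta>)"
    by (simp only: round)
  also have "\<dots> = \<beta> ^ Suc t"
    using Suc by (simp add: sum_distrib_right[symmetric])
  finally show ?case .
qed simp

lemma sum_sqrt_mult_square_le_sum_min:
  fixes p q :: "'a \<Rightarrow> real"
  assumes nn: "\<And>x. 0 \<le> p x" "\<And>x. 0 \<le> q x"
    and p1: "(\<Sum>x\<in>S. p x) = 1" and q1: "(\<Sum>x\<in>S. q x) = 1"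
  shows "(\<Sum>x\<in>S. sqrt (p x * q x))^2 \<le> 2 * (\<Sum>x\<in>S. min (p x) (q x))"
proof -
  have split: "sqrt (p x * q x) = sqrt (min (p x) (q x)) * sqrt (max (p x) (q x))" for x
    by (simp add: real_sqrt_mult[symmetric] min_def max_def mult.commute)
  have "(\<Sum>x\<in>S. sqrt (p x * q x))^2
      \<le> (\<Sum>x\<in>S. (sqrt (min (p x) (q x)))^2) * (\<Sum>x\<in>S. (sqrt (max (p x) (q x)))^2)"
    unfolding split by (rule Cauchy_Schwarz_ineq_sum)
  also have "\<dots> = (\<Sum>x\<in>S. min (p x) (q x)) * (\<Sum>x\<in>S. max (p x) (q x))"
    using nn by (simp add: min_def max_def)
  also have "\<dots> \<le> (\<Sum>x\<in>S. min (p x) (q x)) * (\<Sum>x\<in>S. p x + q x)"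
    using nn by (intro mult_left_mono sum_mono sum_nonneg) auto
  finally show ?thesis using p1 q1 by (simp add: sum.distrib)
qed

lemma two_point_lower_bound:
  fixes p q T :: "'a \<Rightarrow> real"
  assumes "\<And>x. 0 \<le> p x" "\<And>x. 0 \<le> q x"
  shows "\<bar>a - b\<bar> * (\<Sum>x\<in>S. min (p x) (q x))
           \<le> (\<Sum>x\<in>S. \<bar>T x - a\<bar> * p x) + (\<Sum>x\<in>S. \<bar>T x - b\<bar> * q x)"
proof -
  have "min (p x) (q x) * \<bar>a - b\<bar> \<le> \<bar>T x - a\<bar> * p x + \<bar>T x - b\<bar> * q x" for x
  proof -
    have "min (p x) (q x) * \<bar>a - b\<bar> \<le> min (p x) (q x) * (\<bar>T x - a\<bar> + \<bar>T x - b\<bar>)"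
      using assms by (intro mult_left_mono) auto
    also have "\<dots> \<le> \<bar>T x - a\<bar> * p x + \<bar>T x - b\<bar> * q x"
      using mult_right_mono[of "min (p x) (q x)" "p x" "\<bar>T x - a\<bar>"]
        mult_right_mono[of "min (p x) (q x)" "q x" "\<bar>T x - b\<bar>"]
      by (simp add: distrib_left mult.commute)
    finally show ?thesis .
  qed
  then show ?thesis
    by (simp add: sum_distrib_left sum.distrib[symmetric] mult.commute sum_mono)
qed

lemma overlap_run_scheme_ge:
  assumes arms: "\<forall>h. A h \<in> {1, 2}"
    and q: "\<And>a. a \<in> {1, 2} \<Longrightarrow> 0 \<le> q1 a \<and> q1 a \<le> 1 \<and> 0 \<le> q2 a \<and> q2 a \<le> 1"
    and \<beta>: "\<And>a. a \<in> {1, 2} \<Longrightarrow> bernoulli_affinity (q1 a) (q2 a) = \<beta>"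
    and \<eta>: "1 - \<eta> \<le> \<beta>" "0 \<le> \<eta>"
  shows "(1 - sqrt (4 * n * \<eta>)) / 2
           \<le> (\<Sum>h\<in>histories n. min (pmf (run_scheme A q1 n) h) (pmf (run_scheme A q2 n) h))"
proof -
  have "0 \<le> \<beta>"
    using \<beta>[of 1] q[of 1] by (auto simp: bernoulli_affinity_def)
  then have "1 - sqrt (4 * n * \<eta>) \<le> (\<beta> ^ n)^2"
    using power_ge_one_minus_sqrt[OF _ \<eta>] by (simp add: power_mult[symmetric] mult.commute)
  also have "\<dots> = (\<Sum>h\<in>histories n. sqrt (pmf (run_scheme A q1 n) h * pmf (run_scheme A q2 n) h))^2"
    by (simp only: affinity_run_scheme[OF arms q \<beta>])
  also have "\<dots> \<le> 2 * (\<Sum>h\<in>histories n. min (pmf (run_scheme A q1 n) h) (pmf (run_scheme A q2 n) h))"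
    using set_pmf_run_scheme_subset[OF arms]
    by (intro sum_sqrt_mult_square_le_sum_min finite_histories sum_pmf_eq_1) auto
  finally show ?thesis by simp
qed

lemma overlap_swapped_arms_ge:
  fixes p q :: real
  assumes arms: "\<forall>h. A h \<in> {1, 2}" and "1/2 < q" "q \<le> p" "p < 1"
  shows "(1 - (p - q) * sqrt (n / (1 - p))) / 2
           \<le> (\<Sum>h\<in>histories n. min (pmf (run_scheme A (\<lambda>i. if i = 1 then p else q) n) h)
                                      (pmf (run_scheme A (\<lambda>i. if i = 1 then q else p) n) h))"
proof -
  have "4 * n * ((p - q)^2 / (4 * (1 - p))) = (p - q)^2 * (n / (1 - p))"
    using assms by (simp add: field_simps)
  then have "sqrt (4 * n * ((p - q)^2 / (4 * (1 - p)))) = (p - q) * sqrt (n / (1 - p))"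
    using assms by (simp only: real_sqrt_mult) simp
  moreover have "1 - (p - q)^2 / (4 * (1 - p)) \<le> bernoulli_affinity p q"
    using assms by (intro bernoulli_affinity_ge)
  ultimately show ?thesis
    using overlap_run_scheme_ge[OF arms, of "\<lambda>i. if i = 1 then p else q" "\<lambda>i. if i = 1 then q else p"
        "bernoulli_affinity p q" "(p - q)^2 / (4 * (1 - p))" n] assms
    by (auto simp: bernoulli_affinity_def mult.commute)
qed

lemma approx_oracle_add:
  assumes "0 < cf (q 1)" "0 < cf (q 2)"
  shows "approx_oracle cf \<alpha> n q 1 + approx_oracle cf \<alpha> n q 2 = real n"
proof -
  have "0 < cf (q 1) powr (1/\<alpha>)" "0 < cf (q 2) powr (1/\<alpha>)"
    using assms by simp_all
  then have "cf (q 1) powr (1/\<alpha>) + cf (q 2) powr (1/\<alpha>) \<noteq> 0" by linarith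
  then show ?thesis
    by (simp add: approx_oracle_def add_divide_distrib[symmetric] distrib_left[symmetric])
qed

theorem mainTheorem7:
  fixes cf :: "real \<Rightarrow> real" and \<alpha> p0 \<epsilon> :: real and n :: nat
    and A :: "history \<Rightarrow> nat"
  assumes cf_pos: "\<forall>x\<in>{0<..<1}. cf x > 0"
    and \<alpha>_pos: "\<alpha> > 0"
    and n_pos: "n \<ge> 1"
    and p0: "1/2 < p0" "p0 < 1"
    and \<epsilon>: "0 < \<epsilon>" "\<epsilon> < p0 - 1/2"
    and A_arms: "\<forall>h. A h \<in> {1, 2}"
  defines "P1 \<equiv> (\<lambda>i::nat. if i = 1 then p0 else p0 - \<epsilon>)"
    and "P2 \<equiv> (\<lambda>i::nat. if i = 1 then p0 - \<epsilon> else p0)"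
    and "\<tau> \<equiv> \<bar>approx_oracle cf \<alpha> n (\<lambda>i::nat. if i = 1 then p0 else p0 - \<epsilon>) 1 - real n / 2\<bar>"
    and "E \<equiv> (\<lambda>P i. measure_pmf.expectation (run_scheme A P n)
                 (\<lambda>h. \<bar>real (num_samples i h) - approx_oracle cf \<alpha> n P i\<bar>))"
  shows "max (max (E P1 1) (E P1 2)) (max (E P2 1) (E P2 2))
           \<ge> (1 - \<epsilon> * sqrt (real n / (1 - p0))) * \<tau> / 2"
proof -
  define a where "a = approx_oracle cf \<alpha> n P1 1"
  define b where "b = approx_oracle cf \<alpha> n P2 1"
  define overlap where
    "overlap = (\<Sum>h\<in>histories n. min (pmf (run_scheme A P1 n) h) (pmf (run_scheme A P2 n) h))"
  have "b = approx_oracle cf \<alpha> n P1 2"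
    by (simp add: b_def approx_oracle_def P1_def P2_def add.commute)
  then have "a + b = real n"
    using approx_oracle_add[of cf P1] cf_pos p0 \<epsilon> by (simp add: a_def P1_def)
  moreover have "\<tau> = \<bar>a - real n / 2\<bar>"
    by (simp add: \<tau>_def a_def P1_def)
  ultimately have gap: "\<bar>a - b\<bar> = 2 * \<tau>" by linarith
  have "E P i = (\<Sum>h\<in>histories n.
      \<bar>real (num_samples i h) - approx_oracle cf \<alpha> n P i\<bar> * pmf (run_scheme A P n) h)" for P i
    unfolding E_def using set_pmf_run_scheme_subset[OF A_arms]
    by (intro integral_measure_pmf_real[OF finite_histories]) auto
  then have two_point: "\<bar>a - b\<bar> * overlap \<le> E P1 1 + E P2 1"
    unfolding a_def b_def overlap_def by (simp add: two_point_lower_bound)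
  have "(1 - \<epsilon> * sqrt (real n / (1 - p0))) / 2 \<le> overlap"
    using overlap_swapped_arms_ge[OF A_arms, of "p0 - \<epsilon>" p0 n] p0 \<epsilon>
    by (simp add: overlap_def P1_def P2_def)
  then have "(1 - \<epsilon> * sqrt (real n / (1 - p0))) / 2 * \<bar>a - b\<bar> \<le> overlap * \<bar>a - b\<bar>"
    by (intro mult_right_mono) auto
  also have "\<dots> \<le> E P1 1 + E P2 1"
    using two_point by (simp add: mult.commute)
  finally show ?thesis
    unfolding gap by linarith
qed

end
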